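(* For every $n\in\mathbb{N}$: (1) there exist a modal space $\boldsymbol{X}$, a clean map $\boldsymbol{f}$ on $\boldsymbol{X}$ induced by a finite, static multi-pointed action model that is not Boolean, and a point $\boldsymbol{x}\in\boldsymbol{X}$ whose orbit $\mathcal{O}_{\boldsymbol{f}}(\boldsymbol{x})$ is periodic with period $n$; and (2) the same holds with a clean map induced by a finite, Boolean multi-pointed action model that is not static.
   Context: Setting: atom set $\Phi$, finite agent set $I$, modal language $\mathcal{L}$ ($\varphi::=\top\mid p\mid\neg\varphi\mid\varphi\wedge\varphi\mid\square_i\varphi$), logic $\Lambda$ a normal modal logic extending $K$. For a set $X$ of pointed Kripke models (countable nonempty state sets, standard semantics), the $\boldsymbol{\mathcal{L}}_\Lambda$ modal space is $\boldsymbol{X}=\{\boldsymbol{x}:x\in X\}$, $\boldsymbol{x}=\{y\in X:y,x\text{ satisfy the same formulas}\}$. Clean map: induced via product update $x\mapsto x\otimes\Sigma\Gamma$ by a multi-pointed action model $\Sigma\Gamma=(\llbracket\Sigma\rrbracket,\mathsf{R},pre,post,\Gamma)$ (countable action set, relations $\mathsf{R}_i$, preconditions in $\mathcal{L}$, postconditions $\top$ or conjunctions of literals over $\Phi$, designated set $\emptyset\ne\Gamma\subseteq\llbracket\Sigma\rrbracket$) that is precondition finite, exhaustive, deterministic and closing over $X$ (every $x\in X$ satisfies $pre(\sigma)$ for exactly one $\sigma\in\Gamma$, finitely many preconditions up to $\Lambda$-equivalence, and $x\otimes\Sigma\Gamma\in X$). Product update: states $(s,\sigma)$ with $Ms\vDash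 pre(\sigma)$, relations componentwise, $p$ true at $(s,\sigma)$ iff $post(\sigma)\vDash p$, or $s\in\llbracket p\rrbracket$ and $post(\sigma)\nvDash\neg p$; designated state $(s,\sigma)$ for the applicable $\sigma\in\Gamma$. $\boldsymbol{f}(\boldsymbol{x})$ is the class of $x\otimes\Sigma\Gamma$. $\Sigma\Gamma$ is finite if $\llbracket\Sigma\rrbracket$ is finite, Boolean if every precondition is modality-free, static if every postcondition is $\top$. Orbit $\mathcal{O}_{\boldsymbol{f}}(\boldsymbol{x})=\{\boldsymbol{f}^m(\boldsymbol{x}):m\in\mathbb{N}_0\}$ is periodic if $\boldsymbol{f}^{m+k}(\boldsymbol{x})=\boldsymbol{f}^m(\boldsymbol{x})$ for some $m\ge0,k>0$; the least such $k$ is its period. *)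

theory Defs
  imports Main "HOL-Library.Nat_Bijection"
begin

datatype ('a, 'i) form =
    Top
  | Atom 'a
  | Neg "('a, 'i) form"
  | Conj "('a, 'i) form" "('a, 'i) form"
  | Box 'i "('a, 'i) form"

definition Imp :: "('a, 'i) form \<Rightarrow> ('a, 'i) form \<Rightarrow> ('a, 'i) form" where
  "Imp \<phi> \<psi> = Neg (Conj \<phi> (Neg \<psi>))"

definition Iff :: "('a, 'i) form \<Rightarrow> ('a, 'i) form \<Rightarrow> ('a, 'i) form" where
  "Iff \<phi> \<psi> = Conj (Imp \<phi> \<psi>) (Imp \<psi> \<phi>)"

fun modality_free :: "('a, 'i) form \<Rightarrow> bool" where
  "modality_free Top = True"
| "modality_free (Atom p) = True"
| "modality_free (Neg \<phi>) = modality_free \<phi>"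
| "modality_free (Conj \<phi> \<psi>) = (modality_free \<phi> \<and> modality_free \<psi>)"
| "modality_free (Box i \<phi>) = False"

text \<open>Propositional evaluation, treating atoms and boxed formulas as propositional letters.\<close>
fun peval :: "(('a, 'i) form \<Rightarrow> bool) \<Rightarrow> ('a, 'i) form \<Rightarrow> bool" where
  "peval v Top = True"
| "peval v (Atom p) = v (Atom p)"
| "peval v (Neg \<phi>) = (\<not> peval v \<phi>)"
| "peval v (Conj \<phi> \<psi>) = (peval v \<phi> \<and> peval v \<psi>)"
| "peval v (Box i \<phi>) = v (Box i \<phi>)"

definition taut :: "('a, 'i) form \<Rightarrow> bool" where
  "taut \<phi> = (\<forall>v. peval v \<phi>)"

fun subst :: "('a \<Rightarrow> ('a, 'i) form) \<Rightarrow> ('a, 'i) form \<Rightarrow> ('a, 'i) form" where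
  "subst s Top = Top"
| "subst s (Atom p) = s p"
| "subst s (Neg \<phi>) = Neg (subst s \<phi>)"
| "subst s (Conj \<phi> \<psi>) = Conj (subst s \<phi>) (subst s \<psi>)"
| "subst s (Box i \<phi>) = Box i (subst s \<phi>)"

definition normal_logic :: "('a, 'i) form set \<Rightarrow> bool" where
  "normal_logic \<Lambda> \<longleftrightarrow>
     (\<forall>\<phi>. taut \<phi> \<longrightarrow> \<phi> \<in> \<Lambda>)
   \<and> (\<forall>i \<phi> \<psi>. Imp (Box i (Imp \<phi> \<psi>)) (Imp (Box i \<phi>) (Box i \<psi>)) \<in> \<Lambda>)
   \<and> (\<forall>\<phi> \<psi>. \<phi> \<in> \<Lambda> \<longrightarrow> Imp \<phi> \<psi> \<in> \<Lambda> \<longrightarrow> \<psi> \<in> \<Lambda>)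
   \<and> (\<forall>i \<phi>. \<phi> \<in> \<Lambda> \<longrightarrow> Box i \<phi> \<in> \<Lambda>)
   \<and> (\<forall>s \<phi>. \<phi> \<in> \<Lambda> \<longrightarrow> subst s \<phi> \<in> \<Lambda>)"

text \<open>States are natural numbers (so every state set is countable).\<close>
record ('a, 'i) kmodel =
  W :: "nat set"
  Rel :: "'i \<Rightarrow> nat \<Rightarrow> nat \<Rightarrow> bool"
  Val :: "'a \<Rightarrow> nat set"

type_synonym ('a, 'i) pointed = "('a, 'i) kmodel \<times> nat"

fun sat :: "('a, 'i) kmodel \<Rightarrow> nat \<Rightarrow> ('a, 'i) form \<Rightarrow> bool" where
  "sat M w Top = True"
| "sat M w (Atom p) = (w \<in> Val M p)"
| "sat M w (Neg \<phi>) = (\<not> sat M w \<phi>)"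
| "sat M w (Conj \<phi> \<psi>) = (sat M w \<phi> \<and> sat M w \<psi>)"
| "sat M w (Box i \<phi>) = (\<forall>v \<in> W M. Rel M i w v \<longrightarrow> sat M v \<phi>)"

definition psat :: "('a, 'i) pointed \<Rightarrow> ('a, 'i) form \<Rightarrow> bool" where
  "psat x \<phi> = sat (fst x) (snd x) \<phi>"

definition wf_pointed :: "('a, 'i) pointed \<Rightarrow> bool" where
  "wf_pointed x \<longleftrightarrow> W (fst x) \<noteq> {} \<and> snd x \<in> W (fst x)
     \<and> (\<forall>i u v. Rel (fst x) i u v \<longrightarrow> u \<in> W (fst x) \<and> v \<in> W (fst x))
     \<and> (\<forall>p. Val (fst x) p \<subseteq> W (fst x))"

definition mequiv :: "('a, 'i) pointed \<Rightarrow> ('a, 'i) pointed \<Rightarrow> bool" where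
  "mequiv x y \<longleftrightarrow> (\<forall>\<phi>. psat x \<phi> = psat y \<phi>)"

definition mclass :: "('a, 'i) pointed set \<Rightarrow> ('a, 'i) pointed \<Rightarrow> ('a, 'i) pointed set" where
  "mclass X x = {y \<in> X. mequiv y x}"

definition modal_space :: "('a, 'i) pointed set \<Rightarrow> ('a, 'i) pointed set set" where
  "modal_space X = mclass X ` X"

text \<open>Actions are natural numbers (countable action set).\<close>
record ('a, 'i) amodel =
  Act :: "nat set"
  ARel :: "'i \<Rightarrow> nat \<Rightarrow> nat \<Rightarrow> bool"
  pre :: "nat \<Rightarrow> ('a, 'i) form"
  post :: "nat \<Rightarrow> ('a, 'i) form"
  Des :: "nat set"

fun is_literal :: "('a, 'i) form \<Rightarrow> bool" where
  "is_literal (Atom p) = True"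
| "is_literal (Neg (Atom p)) = True"
| "is_literal _ = False"

fun conj_literals :: "('a, 'i) form \<Rightarrow> bool" where
  "conj_literals (Conj \<phi> \<psi>) = (conj_literals \<phi> \<and> conj_literals \<psi>)"
| "conj_literals \<phi> = is_literal \<phi>"

definition valid_post :: "('a, 'i) form \<Rightarrow> bool" where
  "valid_post \<phi> \<longleftrightarrow> \<phi> = Top \<or> conj_literals \<phi>"

definition wf_amodel :: "('a, 'i) amodel \<Rightarrow> bool" where
  "wf_amodel S \<longleftrightarrow> Des S \<noteq> {} \<and> Des S \<subseteq> Act S
     \<and> (\<forall>i \<sigma> \<tau>. ARel S i \<sigma> \<tau> \<longrightarrow> \<sigma> \<in> Act S \<and> \<tau> \<in> Act S)
     \<and> (\<forall>\<sigma> \<in> Act S. valid_post (post S \<sigma>))"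

text \<open>Semantic consequence (used for postconditions, which are modality-free).\<close>
definition entails :: "('a, 'i) form \<Rightarrow> ('a, 'i) form \<Rightarrow> bool" where
  "entails \<phi> \<psi> \<longleftrightarrow> (\<forall>(M :: ('a, 'i) kmodel) w. sat M w \<phi> \<longrightarrow> sat M w \<psi>)"

text \<open>Product states (s, sigma) are encoded as natural numbers via prod_encode.\<close>
definition upd_W :: "('a, 'i) kmodel \<Rightarrow> ('a, 'i) amodel \<Rightarrow> nat set" where
  "upd_W M S = {prod_encode (s, \<sigma>) | s \<sigma>. s \<in> W M \<and> \<sigma> \<in> Act S \<and> sat M s (pre S \<sigma>)}"

definition upd_model :: "('a, 'i) kmodel \<Rightarrow> ('a, 'i) amodel \<Rightarrow> ('a, 'i) kmodel" where
  "upd_model M S =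
    \<lparr> W = upd_W M S,
      Rel = (\<lambda>i u v. u \<in> upd_W M S \<and> v \<in> upd_W M S
               \<and> Rel M i (fst (prod_decode u)) (fst (prod_decode v))
               \<and> ARel S i (snd (prod_decode u)) (snd (prod_decode v))),
      Val = (\<lambda>p. {u \<in> upd_W M S.
               entails (post S (snd (prod_decode u))) (Atom p)
             \<or> (fst (prod_decode u) \<in> Val M p
                \<and> \<not> entails (post S (snd (prod_decode u))) (Neg (Atom p)))}) \<rparr>"

definition des_act :: "('a, 'i) amodel \<Rightarrow> ('a, 'i) pointed \<Rightarrow> nat" where
  "des_act S x = (THE \<sigma>. \<sigma> \<in> Des S \<and> psat x (pre S \<sigma>))"

definition upd :: "('a, 'i) pointed \<Rightarrow> ('a, 'i) amodel \<Rightarrow> ('a, 'i) pointed" where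
  "upd x S = (upd_model (fst x) S, prod_encode (snd x, des_act S x))"

definition precondition_finite :: "('a, 'i) form set \<Rightarrow> ('a, 'i) amodel \<Rightarrow> bool" where
  "precondition_finite \<Lambda> S \<longleftrightarrow>
     (\<exists>F. finite F \<and> (\<forall>\<sigma> \<in> Act S. \<exists>\<psi> \<in> F. Iff (pre S \<sigma>) \<psi> \<in> \<Lambda>))"

definition exhaustive_deterministic :: "('a, 'i) amodel \<Rightarrow> ('a, 'i) pointed set \<Rightarrow> bool" where
  "exhaustive_deterministic S X \<longleftrightarrow> (\<forall>x \<in> X. \<exists>!\<sigma>. \<sigma> \<in> Des S \<and> psat x (pre S \<sigma>))"

definition closing :: "('a, 'i) amodel \<Rightarrow> ('a, 'i) pointed set \<Rightarrow> bool" where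
  "closing S X \<longleftrightarrow> (\<forall>x \<in> X. upd x S \<in> X)"

definition clean_amodel :: "('a, 'i) form set \<Rightarrow> ('a, 'i) pointed set \<Rightarrow> ('a, 'i) amodel \<Rightarrow> bool" where
  "clean_amodel \<Lambda> X S \<longleftrightarrow> wf_amodel S \<and> precondition_finite \<Lambda> S
     \<and> exhaustive_deterministic S X \<and> closing S X"

definition induced_map :: "('a, 'i) pointed set \<Rightarrow> ('a, 'i) amodel
    \<Rightarrow> (('a, 'i) pointed set \<Rightarrow> ('a, 'i) pointed set) \<Rightarrow> bool" where
  "induced_map X S f \<longleftrightarrow> (\<forall>x \<in> X. f (mclass X x) = mclass X (upd x S))"

definition finite_am :: "('a, 'i) amodel \<Rightarrow> bool" where
  "finite_am S \<longleftrightarrow> finite (Act S)"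

definition boolean_am :: "('a, 'i) amodel \<Rightarrow> bool" where
  "boolean_am S \<longleftrightarrow> (\<forall>\<sigma> \<in> Act S. modality_free (pre S \<sigma>))"

definition static_am :: "('a, 'i) amodel \<Rightarrow> bool" where
  "static_am S \<longleftrightarrow> (\<forall>\<sigma> \<in> Act S. post S \<sigma> = Top)"

definition periodic_orbit :: "('b \<Rightarrow> 'b) \<Rightarrow> 'b \<Rightarrow> bool" where
  "periodic_orbit f x \<longleftrightarrow> (\<exists>m k. k > 0 \<and> (f ^^ (m + k)) x = (f ^^ m) x)"

definition orbit_period :: "('b \<Rightarrow> 'b) \<Rightarrow> 'b \<Rightarrow> nat" where
  "orbit_period f x = (LEAST k. k > 0 \<and> (\<exists>m. (f ^^ (m + k)) x = (f ^^ m) x))"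

end

theory Submission
  imports Defs "HOL-Library.Countable"
begin

text \<open>
A clean map of period \<open>n\<close> arises from pointed models \<open>x 0, \<dots>, x (n - 1)\<close> that are pairwise
modally inequivalent and such that updating \<open>x c\<close> yields a model bisimilar to \<open>x ((c + 1) mod n)\<close>.
Product update preserves bisimilarity, so the orbit of \<open>x 0\<close> runs through the classes of
\<open>x 0, \<dots>, x (n - 1)\<close> cyclically, and the orbit itself is a set on which the action model is clean.

Static case: the root sees a world \<open>Full\<close>, which sees chains of every height \<open>\<le> n\<close>, and a
world \<open>Gap\<close>, which sees the chains of height \<open>< n\<close> except the one of height \<open>c\<close>. The designated
action \<open>Pick c\<close> recognises \<open>c\<close> by the modal precondition "some child has no child of height
\<open>c\<close>". Below it, \<open>Full\<close> is copied twice: unchanged, and without its chains of heights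
\<open>(c + 1) mod n\<close> and \<open>n\<close>, which is the new \<open>Gap\<close>; the old \<open>Gap\<close> dies, lacking a child of height \<open>n\<close>.

Boolean case: the root sees chains of length \<open>\<le> n\<close> marked at arbitrary positions and one chain of
length \<open>n + 1\<close> marked at position \<open>c\<close>. Below the root, an action guesses the position of the
mark and moves it one step on; Boolean preconditions check the guess cell by cell, so a wrong
guess truncates the copy to length \<open>\<le> n\<close>, where it is absorbed by the short chains. Only the long
chain with the right guess survives in full, now marked at \<open>c mod n + 1\<close>.
\<close>

definition zig :: "('a, 'i) kmodel \<Rightarrow> ('a, 'i) kmodel \<Rightarrow> (nat \<Rightarrow> nat \<Rightarrow> bool) \<Rightarrow> bool" where
  "zig M M' Z \<longleftrightarrow> (\<forall>u v i u'. Z u v \<longrightarrow> u' \<in> W M \<longrightarrow> Rel M i u u' \<longrightarrow>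
     (\<exists>v' \<in> W M'. Rel M' i v v' \<and> Z u' v'))"

definition bisimulation :: "('a, 'i) kmodel \<Rightarrow> ('a, 'i) kmodel \<Rightarrow> (nat \<Rightarrow> nat \<Rightarrow> bool) \<Rightarrow> bool" where
  "bisimulation M M' Z \<longleftrightarrow>
     (\<forall>u v. Z u v \<longrightarrow> u \<in> W M \<and> v \<in> W M' \<and> (\<forall>q. (u \<in> Val M q) = (v \<in> Val M' q)))
     \<and> zig M M' Z \<and> zig M' M Z\<inverse>\<inverse>"

definition bisimilar :: "('a, 'i) pointed \<Rightarrow> ('a, 'i) pointed \<Rightarrow> bool" where
  "bisimilar x y \<longleftrightarrow> (\<exists>Z. bisimulation (fst x) (fst y) Z \<and> Z (snd x) (snd y))"

lemma bisimulation_converse: "bisimulation M M' Z \<Longrightarrow> bisimulation M' M Z\<inverse>\<inverse>"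
  unfolding bisimulation_def by auto

lemma bisimulation_sat:
  assumes "bisimulation M M' Z" "Z u v"
  shows "sat M u \<phi> = sat M' v \<phi>"
  using assms(2)
proof (induction \<phi> arbitrary: u v)
  case (Atom p)
  then show ?case using assms(1) unfolding bisimulation_def by simp
next
  case (Box i \<phi>)
  have zigs: "zig M M' Z" "zig M' M Z\<inverse>\<inverse>"
    using assms(1) by (simp_all add: bisimulation_def)
  show ?case
  proof
    assume "sat M u (Box i \<phi>)"
    then show "sat M' v (Box i \<phi>)"
      using zigs(2) Box unfolding zig_def by fastforce
  next
    assume "sat M' v (Box i \<phi>)"
    then show "sat M u (Box i \<phi>)"
      using zigs(1) Box unfolding zig_def by fastforce
  qed
qed simp_all

lemma bisimilar_mequiv: "bisimilar x y \<Longrightarrow> mequiv x y"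
  unfolding bisimilar_def mequiv_def psat_def using bisimulation_sat by blast

lemma bisimilar_refl: "snd x \<in> W (fst x) \<Longrightarrow> bisimilar x x"
  unfolding bisimilar_def
  by (rule exI[of _ "\<lambda>u v. u = v \<and> u \<in> W (fst x)"]) (auto simp: bisimulation_def zig_def)

lemma zig_relcompp:
  assumes "zig M M' Z" "zig M' M'' Z'"
  shows "zig M M'' (Z OO Z')"
  unfolding zig_def
proof (intro allI impI)
  fix u w i u'
  assume "(Z OO Z') u w" "u' \<in> W M" "Rel M i u u'"
  then obtain v v' where "Z u v" "Z' v w" "v' \<in> W M'" "Rel M' i v v'" "Z u' v'"
    using assms(1) unfolding zig_def by blast
  then obtain w' where "w' \<in> W M''" "Rel M'' i w w'" "Z' v' w'"
    using assms(2) unfolding zig_def by blast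
  then show "\<exists>w' \<in> W M''. Rel M'' i w w' \<and> (Z OO Z') u' w'"
    using \<open>Z u' v'\<close> by blast
qed

lemma bisimulation_relcompp:
  assumes "bisimulation M M' Z" "bisimulation M' M'' Z'"
  shows "bisimulation M M'' (Z OO Z')"
  using assms unfolding bisimulation_def converse_relcompp
  by (auto intro: zig_relcompp)

lemma bisimilar_trans: "bisimilar x y \<Longrightarrow> bisimilar y z \<Longrightarrow> bisimilar x z"
  unfolding bisimilar_def using bisimulation_relcompp by (metis relcompp.relcompI)

definition upd_relation :: "('a, 'i) kmodel \<Rightarrow> ('a, 'i) kmodel \<Rightarrow> ('a, 'i) amodel
    \<Rightarrow> (nat \<Rightarrow> nat \<Rightarrow> bool) \<Rightarrow> nat \<Rightarrow> nat \<Rightarrow> bool" where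
  "upd_relation M M' S Z u u' \<longleftrightarrow> u \<in> upd_W M S \<and> u' \<in> upd_W M' S
     \<and> Z (fst (prod_decode u)) (fst (prod_decode u')) \<and> snd (prod_decode u) = snd (prod_decode u')"

lemma upd_W_iff:
  "prod_encode (s, \<sigma>) \<in> upd_W M S \<longleftrightarrow> s \<in> W M \<and> \<sigma> \<in> Act S \<and> sat M s (pre S \<sigma>)"
  unfolding upd_W_def by (auto dest: inj_onD[OF inj_prod_encode, simplified])

lemma upd_W_elim:
  assumes "u \<in> upd_W M S"
  obtains s \<sigma> where "u = prod_encode (s, \<sigma>)" "s \<in> W M" "\<sigma> \<in> Act S" "sat M s (pre S \<sigma>)"
  using assms unfolding upd_W_def by blast

lemma zig_upd_model:
  assumes zig: "zig M M' Z"
    and pre: "\<And>s s' \<sigma>. Z s s' \<Longrightarrow> sat M s (pre S \<sigma>) \<Longrightarrow> sat M' s' (pre S \<sigma>)"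
  shows "zig (upd_model M S) (upd_model M' S) (upd_relation M M' S Z)"
  unfolding zig_def
proof (intro allI impI)
  fix u u' i w
  assume related: "upd_relation M M' S Z u u'"
    and w: "w \<in> W (upd_model M S)" "Rel (upd_model M S) i u w"
  obtain s s' \<sigma> where u: "u = prod_encode (s, \<sigma>)" "u' = prod_encode (s', \<sigma>)" "Z s s'"
    using related unfolding upd_relation_def by (metis prod.collapse prod_decode_inverse)
  obtain t \<tau> where t: "w = prod_encode (t, \<tau>)" "t \<in> W M" "\<tau> \<in> Act S" "sat M t (pre S \<tau>)"
    using w by (auto simp: upd_model_def elim: upd_W_elim)
  have steps: "Rel M i s t" "ARel S i \<sigma> \<tau>"
    using w u t by (simp_all add: upd_model_def)
  obtain t' where t': "t' \<in> W M'" "Rel M' i s' t'" "Z t t'"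
    using zig u(3) t(2) steps(1) unfolding zig_def by blast
  have "prod_encode (t', \<tau>) \<in> upd_W M' S"
    using t' t pre by (simp add: upd_W_iff)
  then show "\<exists>w' \<in> W (upd_model M' S). Rel (upd_model M' S) i u' w' \<and> upd_relation M M' S Z w w'"
    using related t t' steps u
    by (intro bexI[of _ "prod_encode (t', \<tau>)"]) (auto simp: upd_model_def upd_relation_def upd_W_iff)
qed

lemma bisimulation_upd_model:
  assumes "bisimulation M M' Z"
  shows "bisimulation (upd_model M S) (upd_model M' S) (upd_relation M M' S Z)"
proof -
  have "(upd_relation M M' S Z)\<inverse>\<inverse> = upd_relation M' M S Z\<inverse>\<inverse>"
    by (auto simp: upd_relation_def fun_eq_iff)
  moreover have "zig (upd_model M S) (upd_model M' S) (upd_relation M M' S Z)"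
    "zig (upd_model M' S) (upd_model M S) (upd_relation M' M S Z\<inverse>\<inverse>)"
    using assms bisimulation_sat[OF assms] bisimulation_sat[OF bisimulation_converse[OF assms]]
    by (auto simp: bisimulation_def intro!: zig_upd_model)
  moreover have "u \<in> Val (upd_model M S) q \<longleftrightarrow> u' \<in> Val (upd_model M' S) q"
    if "upd_relation M M' S Z u u'" for u u' q
    using that assms unfolding bisimulation_def upd_relation_def by (auto simp: upd_model_def)
  ultimately show ?thesis
    unfolding bisimulation_def by (auto simp: upd_model_def upd_relation_def)
qed

lemma des_act_mequiv: "mequiv x y \<Longrightarrow> des_act S x = des_act S y"
  unfolding des_act_def mequiv_def by simp

lemma bisimilar_upd:
  assumes "bisimilar x y" "des_act S x \<in> Act S" "psat x (pre S (des_act S x))"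
  shows "bisimilar (upd x S) (upd y S)"
proof -
  obtain Z where Z: "bisimulation (fst x) (fst y) Z" "Z (snd x) (snd y)"
    using assms(1) unfolding bisimilar_def by blast
  have "des_act S y = des_act S x"
    using des_act_mequiv[OF bisimilar_mequiv[OF assms(1)]] by simp
  then have "upd_relation (fst x) (fst y) S Z (snd (upd x S)) (snd (upd y S))"
    using Z assms bisimulation_sat[OF Z]
    by (auto simp: upd_def upd_relation_def upd_W_iff bisimulation_def psat_def)
  then show ?thesis
    using bisimulation_upd_model[OF Z(1)] unfolding bisimilar_def upd_def by auto
qed

lemma wf_upd:
  assumes "wf_pointed x" "des_act S x \<in> Act S" "psat x (pre S (des_act S x))"
  shows "wf_pointed (upd x S)"
proof -
  have "prod_encode (snd x, des_act S x) \<in> upd_W (fst x) S"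
    using assms unfolding wf_pointed_def psat_def by (simp add: upd_W_iff)
  then show ?thesis
    unfolding wf_pointed_def upd_def by (auto simp: upd_model_def)
qed

lemma periodic_orbit_cyclic:
  assumes "0 < n" and orbit: "\<And>m. (f ^^ m) x = g (m mod n)" and "inj_on g {..<n}"
  shows "periodic_orbit f x" "orbit_period f x = n"
proof -
  show "periodic_orbit f x"
    unfolding periodic_orbit_def using assms by (intro exI[of _ 0] exI[of _ n]) simp
  have "n \<le> k" if "0 < k" "(f ^^ (m + k)) x = (f ^^ m) x" for m k
  proof -
    have "(m + k) mod n = m mod n"
      using that assms by (simp add: inj_on_eq_iff)
    then have "n dvd k"
      using mod_eq_dvd_iff_nat[of m "m + k" n] by simp
    then show ?thesis
      using \<open>0 < k\<close> by (simp add: dvd_imp_le)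
  qed
  then show "orbit_period f x = n"
    unfolding orbit_period_def using assms
    by (intro Least_equality) (auto intro: exI[of _ 0])
qed

lemma rotation_on_image:
  assumes "0 < n" "inj_on K {..<n}"
  obtains f where "\<And>m. (f ^^ m) (K 0) = K (m mod n)" "\<And>c. c < n \<Longrightarrow> f (K c) = K (Suc c mod n)"
proof -
  define f where "f C = K (Suc (SOME c. c < n \<and> C = K c) mod n)" for C
  have f_K: "f (K c) = K (Suc c mod n)" if "c < n" for c
  proof -
    have "(SOME d. d < n \<and> K c = K d) = c"
      using that assms(2) by (intro some_equality) (auto dest: inj_onD)
    then show ?thesis
      unfolding f_def by simp
  qed
  moreover have "(f ^^ m) (K 0) = K (m mod n)" for m
    by (induction m) (use assms(1) f_K in \<open>auto simp: mod_Suc_eq\<close>)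
  ultimately show ?thesis
    using that by blast
qed

lemma des_act_unique:
  assumes "\<exists>!\<sigma>. \<sigma> \<in> Des S \<and> psat x (pre S \<sigma>)"
  shows "des_act S x \<in> Des S" "psat x (pre S (des_act S x))"
  using theI'[OF assms] unfolding des_act_def by auto

lemma precondition_finite_if_finite:
  assumes "normal_logic \<Lambda>" "finite (Act S)"
  shows "precondition_finite \<Lambda> S"
proof -
  have "Iff \<phi> \<phi> \<in> \<Lambda>" for \<phi>
    using assms(1) unfolding normal_logic_def taut_def Iff_def Imp_def by simp
  then show ?thesis
    unfolding precondition_finite_def using assms(2) by (intro exI[of _ "pre S ` Act S"]) auto
qed

context
  fixes S :: "('a, 'i) amodel" and xs :: "nat \<Rightarrow> ('a, 'i) pointed" and n :: nat
  assumes n: "0 < n"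
    and wf_xs: "\<And>c. c < n \<Longrightarrow> wf_pointed (xs c)"
    and wf_S: "wf_amodel S"
    and des_xs: "\<And>c. c < n \<Longrightarrow> \<exists>!\<sigma>. \<sigma> \<in> Des S \<and> psat (xs c) (pre S \<sigma>)"
    and step_xs: "\<And>c. c < n \<Longrightarrow> bisimilar (upd (xs c) S) (xs (Suc c mod n))"
begin

lemma des_act_mequiv_cycle:
  assumes "mequiv z (xs c)" "c < n"
  shows "des_act S z \<in> Act S" "psat z (pre S (des_act S z))"
proof -
  have "\<exists>!\<sigma>. \<sigma> \<in> Des S \<and> psat z (pre S \<sigma>)"
    using des_xs[OF assms(2)] assms(1) unfolding mequiv_def by simp
  then show "des_act S z \<in> Act S" "psat z (pre S (des_act S z))"
    using des_act_unique wf_S unfolding wf_amodel_def by blast+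
qed

lemma upd_iterate_bisimilar_cycle:
  "bisimilar (((\<lambda>z. upd z S) ^^ m) (xs 0)) (xs (m mod n)) \<and> wf_pointed (((\<lambda>z. upd z S) ^^ m) (xs 0))"
proof (induction m)
  case 0
  then show ?case
    using wf_xs[OF n] bisimilar_refl[of "xs 0"] by (simp add: wf_pointed_def)
next
  case (Suc m)
  let ?y = "((\<lambda>z. upd z S) ^^ m) (xs 0)"
  have c: "m mod n < n"
    using n by simp
  note des = des_act_mequiv_cycle[OF bisimilar_mequiv[OF Suc[THEN conjunct1]] c]
  have "bisimilar (upd ?y S) (upd (xs (m mod n)) S)"
    using bisimilar_upd[OF _ des] Suc by blast
  then have "bisimilar (upd ?y S) (xs (Suc m mod n))"
    using bisimilar_trans step_xs[OF c] by (metis mod_Suc_eq)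
  moreover have "wf_pointed (upd ?y S)"
    using wf_upd[OF _ des] Suc by blast
  ultimately show ?case
    by simp
qed

lemma cyclic_clean_map:
  assumes "normal_logic \<Lambda>" "finite (Act S)"
    and distinct: "\<And>c d. c < n \<Longrightarrow> d < n \<Longrightarrow> mequiv (xs c) (xs d) \<Longrightarrow> c = d"
  shows "\<exists>X f x. (\<forall>y \<in> X. wf_pointed y) \<and> clean_amodel \<Lambda> X S \<and> induced_map X S f
            \<and> x \<in> X \<and> periodic_orbit f (mclass X x) \<and> orbit_period f (mclass X x) = n"
proof -
  define y where "y m = ((\<lambda>z. upd z S) ^^ m) (xs 0)" for m
  define X where "X = range y"
  define K where "K c = {z \<in> X. mequiv z (xs c)}" for c
  have y_Suc: "y (Suc m) = upd (y m) S" for m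
    unfolding y_def by simp
  have y_equiv: "mequiv (y m) (xs (m mod n))" for m
    using upd_iterate_bisimilar_cycle bisimilar_mequiv unfolding y_def by blast
  have class_y: "mclass X (y m) = K (m mod n)" for m
    using y_equiv[of m] unfolding mclass_def K_def mequiv_def by auto
  have inj_K: "inj_on K {..<n}"
  proof (rule inj_onI)
    fix c d assume "c \<in> {..<n}" "d \<in> {..<n}" "K c = K d"
    moreover have "y c \<in> K c"
      using y_equiv[of c] \<open>c \<in> {..<n}\<close> unfolding K_def X_def by simp
    ultimately have "mequiv (xs c) (xs d)"
      using y_equiv[of c] unfolding K_def mequiv_def by auto
    then show "c = d"
      using distinct \<open>c \<in> {..<n}\<close> \<open>d \<in> {..<n}\<close> by blast
  qed
  obtain f where f_iterate: "\<And>m. (f ^^ m) (K 0) = K (m mod n)"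
    and f_K: "\<And>c. c < n \<Longrightarrow> f (K c) = K (Suc c mod n)"
    using rotation_on_image[OF n inj_K] by blast
  have "clean_amodel \<Lambda> X S"
    unfolding clean_amodel_def exhaustive_deterministic_def closing_def X_def
    using wf_S precondition_finite_if_finite[OF assms(1,2)] des_xs[of "_ mod n"] y_equiv n
    by (auto simp: mequiv_def y_Suc[symmetric])
  moreover have "induced_map X S f"
    unfolding induced_map_def X_def
    using class_y[unfolded X_def] f_K n by (simp add: y_Suc[symmetric] mod_Suc_eq)
  moreover have "\<forall>z \<in> X. wf_pointed z"
    using upd_iterate_bisimilar_cycle unfolding X_def y_def by blast
  moreover have "y 0 \<in> X"
    unfolding X_def by simp
  ultimately show ?thesis
    using periodic_orbit_cyclic[OF n f_iterate inj_K] class_y[of 0]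
    by (intro exI[of _ X] exI[of _ f] exI[of _ "y 0"]) simp
qed

end

definition lit :: "'a \<Rightarrow> bool \<Rightarrow> ('a, 'i) form" where
  "lit a b = (if b then Atom a else Neg (Atom a))"

lemma sat_lit [simp]: "sat M w (lit a b) \<longleftrightarrow> (w \<in> Val M a \<longleftrightarrow> b)"
  by (simp add: lit_def)

fun assign :: "'a \<Rightarrow> bool option \<Rightarrow> ('a, 'i) form" where
  "assign a None = Top"
| "assign a (Some b) = lit a b"

definition one_world :: "('a \<Rightarrow> bool) \<Rightarrow> ('a, 'i) kmodel" where
  "one_world V = \<lparr>W = {0}, Rel = (\<lambda>_ _ _. False), Val = (\<lambda>q. if V q then {0} else {})\<rparr>"

lemma sat_one_world_Atom: "sat (one_world V) 0 (Atom q) \<longleftrightarrow> V q"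
  by (simp add: one_world_def)

lemma entails_assign_Atom: "entails (assign a e :: ('a, 'i) form) (Atom q) \<longleftrightarrow> q = a \<and> e = Some True"
proof
  assume "entails (assign a e :: ('a, 'i) form) (Atom q)"
  then have "\<not> sat (one_world V :: ('a, 'i) kmodel) 0 (assign a e)" if "\<not> V q" for V
    using that sat_one_world_Atom unfolding entails_def by metis
  from this[of "\<lambda>_. False"] this[of "\<lambda>x. x = a"] show "q = a \<and> e = Some True"
    by (cases e) (auto simp: one_world_def)
qed (auto simp: entails_def lit_def)

lemma entails_assign_Neg_Atom:
  "entails (assign a e :: ('a, 'i) form) (Neg (Atom q)) \<longleftrightarrow> q = a \<and> e = Some False"
proof
  assume "entails (assign a e :: ('a, 'i) form) (Neg (Atom q))"
  then have "\<not> sat (one_world V :: ('a, 'i) kmodel) 0 (assign a e)" if "V q" for V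
    using that sat_one_world_Atom unfolding entails_def by (metis sat.simps(3))
  from this[of "\<lambda>_. True"] this[of "\<lambda>x. x = q"] show "q = a \<and> e = Some False"
    by (cases e) (auto simp: one_world_def split: if_splits)
qed (auto simp: entails_def lit_def)

text \<open>Both constructions need only one agent relation and one atom \<open>a\<close>, since \<open>'a\<close> and \<open>'i\<close>
  may be singletons; their states and actions are countable datatypes, embedded into \<open>nat\<close>.\<close>

definition mk_kmodel :: "'s::countable set \<Rightarrow> ('s \<Rightarrow> 's \<Rightarrow> bool) \<Rightarrow> ('s \<Rightarrow> bool) \<Rightarrow> 'a
    \<Rightarrow> ('a, 'i) kmodel" where
  "mk_kmodel Ws r lab a = \<lparr>W = to_nat ` Ws,
     Rel = (\<lambda>i u v. u \<in> to_nat ` Ws \<and> v \<in> to_nat ` Ws \<and> r (from_nat u) (from_nat v)),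
     Val = (\<lambda>q. if q = a then to_nat ` {s \<in> Ws. lab s} else {})\<rparr>"

definition mk_amodel :: "'b::countable set \<Rightarrow> ('b \<Rightarrow> 'b \<Rightarrow> bool) \<Rightarrow> ('b \<Rightarrow> ('a, 'i) form)
    \<Rightarrow> ('b \<Rightarrow> bool option) \<Rightarrow> 'b set \<Rightarrow> 'a \<Rightarrow> ('a, 'i) amodel" where
  "mk_amodel As ar pr eff Ds a = \<lparr>Act = to_nat ` As,
     ARel = (\<lambda>i \<sigma> \<tau>. \<sigma> \<in> to_nat ` As \<and> \<tau> \<in> to_nat ` As \<and> ar (from_nat \<sigma>) (from_nat \<tau>)),
     pre = (\<lambda>\<sigma>. pr (from_nat \<sigma>)), post = (\<lambda>\<sigma>. assign a (eff (from_nat \<sigma>))),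
     Des = to_nat ` Ds\<rparr>"

definition dia :: "'i \<Rightarrow> ('a, 'i) form \<Rightarrow> ('a, 'i) form" where
  "dia i \<phi> = Neg (Box i (Neg \<phi>))"

lemma to_nat_in_image_iff [simp]: "to_nat s \<in> to_nat ` A \<longleftrightarrow> s \<in> A"
  by (simp add: inj_image_mem_iff)

lemma mk_kmodel_simps [simp]:
  "W (mk_kmodel Ws r lab a) = to_nat ` Ws"
  "Rel (mk_kmodel Ws r lab a) i u v \<longleftrightarrow> u \<in> to_nat ` Ws \<and> v \<in> to_nat ` Ws \<and> r (from_nat u) (from_nat v)"
  "Val (mk_kmodel Ws r lab a) q = (if q = a then to_nat ` {s \<in> Ws. lab s} else {})"
  by (simp_all add: mk_kmodel_def)

lemma mk_amodel_simps [simp]: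
  "Act (mk_amodel As ar pr eff Ds a) = to_nat ` As"
  "ARel (mk_amodel As ar pr eff Ds a) i \<sigma> \<tau> \<longleftrightarrow>
     \<sigma> \<in> to_nat ` As \<and> \<tau> \<in> to_nat ` As \<and> ar (from_nat \<sigma>) (from_nat \<tau>)"
  "pre (mk_amodel As ar pr eff Ds a) \<sigma> = pr (from_nat \<sigma>)"
  "post (mk_amodel As ar pr eff Ds a) \<sigma> = assign a (eff (from_nat \<sigma>))"
  "Des (mk_amodel As ar pr eff Ds a) = to_nat ` Ds"
  by (simp_all add: mk_amodel_def)

lemma sat_mk_Box:
  "sat (mk_kmodel Ws r lab a) (to_nat s) (Box i \<phi>) \<longleftrightarrow>
     (s \<in> Ws \<longrightarrow> (\<forall>t \<in> Ws. r s t \<longrightarrow> sat (mk_kmodel Ws r lab a) (to_nat t) \<phi>))"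
  by auto

lemma sat_mk_dia:
  "sat (mk_kmodel Ws r lab a) (to_nat s) (dia i \<phi>) \<longleftrightarrow>
     s \<in> Ws \<and> (\<exists>t \<in> Ws. r s t \<and> sat (mk_kmodel Ws r lab a) (to_nat t) \<phi>)"
  unfolding dia_def by auto

lemma wf_pointed_mk: "s \<in> Ws \<Longrightarrow> wf_pointed (mk_kmodel Ws r lab a, to_nat s)"
  unfolding wf_pointed_def by auto

lemma valid_post_assign: "valid_post (assign a e)"
  by (cases e) (auto simp: valid_post_def lit_def)

lemma wf_amodel_mk:
  "Ds \<noteq> {} \<Longrightarrow> Ds \<subseteq> As \<Longrightarrow> wf_amodel (mk_amodel As ar pr eff Ds a)"
  unfolding wf_amodel_def by (simp add: image_mono valid_post_assign)

lemma des_act_mk: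
  assumes "\<sigma>\<^sub>0 \<in> Ds" "sat M s (pr \<sigma>\<^sub>0)" "\<And>\<sigma>. \<sigma> \<in> Ds \<Longrightarrow> sat M s (pr \<sigma>) \<Longrightarrow> \<sigma> = \<sigma>\<^sub>0"
  shows "\<exists>!\<sigma>. \<sigma> \<in> Des (mk_amodel As ar pr eff Ds a) \<and> psat (M, s) (pre (mk_amodel As ar pr eff Ds a) \<sigma>)"
    and "des_act (mk_amodel As ar pr eff Ds a) (M, s) = to_nat \<sigma>\<^sub>0"
proof -
  have applicable: "to_nat \<sigma>\<^sub>0 \<in> Des (mk_amodel As ar pr eff Ds a)
      \<and> psat (M, s) (pre (mk_amodel As ar pr eff Ds a) (to_nat \<sigma>\<^sub>0))"
    using assms(1,2) by (simp add: psat_def)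
  show unique: "\<exists>!\<sigma>. \<sigma> \<in> Des (mk_amodel As ar pr eff Ds a) \<and> psat (M, s) (pre (mk_amodel As ar pr eff Ds a) \<sigma>)"
  proof (rule ex1I)
    show "to_nat \<sigma>\<^sub>0 \<in> Des (mk_amodel As ar pr eff Ds a)
      \<and> psat (M, s) (pre (mk_amodel As ar pr eff Ds a) (to_nat \<sigma>\<^sub>0))"
      by (fact applicable)
  next
    fix \<sigma> assume "\<sigma> \<in> Des (mk_amodel As ar pr eff Ds a) \<and> psat (M, s) (pre (mk_amodel As ar pr eff Ds a) \<sigma>)"
    then obtain \<tau> where "\<sigma> = to_nat \<tau>" "\<tau> \<in> Ds" "sat M s (pr \<tau>)"
      by (auto simp: psat_def)
    then show "\<sigma> = to_nat \<sigma>\<^sub>0"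
      using assms(3) by simp
  qed
  show "des_act (mk_amodel As ar pr eff Ds a) (M, s) = to_nat \<sigma>\<^sub>0"
    unfolding des_act_def using the1_equality[OF unique applicable] .
qed

lemma Val_upd_mk:
  assumes "s \<in> Ws"
  shows "prod_encode (to_nat s, to_nat \<sigma>) \<in> Val (upd_model (mk_kmodel Ws r lab a) (mk_amodel As ar pr eff Ds a)) q
    \<longleftrightarrow> prod_encode (to_nat s, to_nat \<sigma>) \<in> upd_W (mk_kmodel Ws r lab a) (mk_amodel As ar pr eff Ds a)
      \<and> q = a \<and> (case eff \<sigma> of None \<Rightarrow> lab s | Some b \<Rightarrow> b)"
  using assms
  by (cases "eff \<sigma>") (auto simp: upd_model_def entails_assign_Atom entails_assign_Neg_Atom)

definition encode_relation :: "('s::countable \<Rightarrow> 'b::countable \<Rightarrow> 't::countable \<Rightarrow> bool) \<Rightarrow> nat \<Rightarrow> nat \<Rightarrow> bool"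
  where "encode_relation Z u v \<longleftrightarrow> (\<exists>s \<sigma> t. u = prod_encode (to_nat s, to_nat \<sigma>) \<and> v = to_nat t \<and> Z s \<sigma> t)"

context
  fixes Ws :: "'s::countable set" and r :: "'s \<Rightarrow> 's \<Rightarrow> bool" and lab :: "'s \<Rightarrow> bool"
    and Ws' :: "'t::countable set" and r' :: "'t \<Rightarrow> 't \<Rightarrow> bool" and lab' :: "'t \<Rightarrow> bool"
    and As :: "'b::countable set" and ar :: "'b \<Rightarrow> 'b \<Rightarrow> bool" and pr :: "'b \<Rightarrow> ('a, 'i) form"
    and eff :: "'b \<Rightarrow> bool option" and Ds :: "'b set" and a :: 'a
    and Z :: "'s \<Rightarrow> 'b \<Rightarrow> 't \<Rightarrow> bool"
  assumes sound: "\<And>s \<sigma> t. Z s \<sigma> t \<Longrightarrow> s \<in> Ws \<and> \<sigma> \<in> As \<and> sat (mk_kmodel Ws r lab a) (to_nat s) (pr \<sigma>)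
        \<and> t \<in> Ws' \<and> lab' t = (case eff \<sigma> of None \<Rightarrow> lab s | Some b \<Rightarrow> b)"
    and forth: "\<And>s \<sigma> t s' \<sigma>'. Z s \<sigma> t \<Longrightarrow> s' \<in> Ws \<Longrightarrow> r s s' \<Longrightarrow> \<sigma>' \<in> As \<Longrightarrow> ar \<sigma> \<sigma>'
        \<Longrightarrow> sat (mk_kmodel Ws r lab a) (to_nat s') (pr \<sigma>') \<Longrightarrow> \<exists>t' \<in> Ws'. r' t t' \<and> Z s' \<sigma>' t'"
    and backward: "\<And>s \<sigma> t t'. Z s \<sigma> t \<Longrightarrow> t' \<in> Ws' \<Longrightarrow> r' t t'
        \<Longrightarrow> \<exists>s' \<sigma>'. s' \<in> Ws \<and> r s s' \<and> \<sigma>' \<in> As \<and> ar \<sigma> \<sigma>' \<and> Z s' \<sigma>' t'"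
begin

abbreviation "src_model \<equiv> mk_kmodel Ws r lab a"
abbreviation "tgt_model \<equiv> mk_kmodel Ws' r' lab' a :: ('a, 'i) kmodel"
abbreviation "act_model \<equiv> mk_amodel As ar pr eff Ds a"

lemma encode_relation_in_upd_W:
  "Z s \<sigma> t \<Longrightarrow> prod_encode (to_nat s, to_nat \<sigma>) \<in> upd_W src_model act_model"
  using sound by (simp add: upd_W_iff)

lemma zig_upd_mk: "zig (upd_model src_model act_model) tgt_model (encode_relation Z)"
  unfolding zig_def
proof (intro allI impI)
  fix u v i w
  assume "encode_relation Z u v" "w \<in> W (upd_model src_model act_model)" "Rel (upd_model src_model act_model) i u w"
  then obtain s \<sigma> t s' \<sigma>' where
    related: "u = prod_encode (to_nat s, to_nat \<sigma>)" "v = to_nat t" "Z s \<sigma> t"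
    and w: "w = prod_encode (to_nat s', to_nat \<sigma>')" "s' \<in> Ws" "\<sigma>' \<in> As" "sat src_model (to_nat s') (pr \<sigma>')"
      "r s s'" "ar \<sigma> \<sigma>'"
    unfolding encode_relation_def by (auto simp: upd_model_def elim!: upd_W_elim)
  then obtain t' where "t' \<in> Ws'" "r' t t'" "Z s' \<sigma>' t'"
    using forth by blast
  then show "\<exists>v' \<in> W tgt_model. Rel tgt_model i v v' \<and> encode_relation Z w v'"
    using related w sound unfolding encode_relation_def by (intro bexI[of _ "to_nat t'"]) auto
qed

lemma zig_converse_upd_mk: "zig tgt_model (upd_model src_model act_model) (encode_relation Z)\<inverse>\<inverse>"
  unfolding zig_def
proof (intro allI impI)
  fix v u i v'
  assume "(encode_relation Z)\<inverse>\<inverse> v u" "v' \<in> W tgt_model" "Rel tgt_model i v v'"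
  then obtain s \<sigma> t t' where
    related: "u = prod_encode (to_nat s, to_nat \<sigma>)" "v = to_nat t" "Z s \<sigma> t"
    and v': "v' = to_nat t'" "t' \<in> Ws'" "r' t t'"
    unfolding encode_relation_def by auto
  then obtain s' \<sigma>' where "s' \<in> Ws" "r s s'" "\<sigma>' \<in> As" "ar \<sigma> \<sigma>'" "Z s' \<sigma>' t'"
    using backward by blast
  then show "\<exists>u' \<in> W (upd_model src_model act_model).
      Rel (upd_model src_model act_model) i u u' \<and> (encode_relation Z)\<inverse>\<inverse> v' u'"
    using related v' sound encode_relation_in_upd_W unfolding encode_relation_def
    by (intro bexI[of _ "prod_encode (to_nat s', to_nat \<sigma>')"]) (auto simp: upd_model_def)
qed

lemma bisimulation_upd_mk: "bisimulation (upd_model src_model act_model) tgt_model (encode_relation Z)"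
proof -
  have "u \<in> W (upd_model src_model act_model) \<and> v \<in> W tgt_model
      \<and> (\<forall>q. u \<in> Val (upd_model src_model act_model) q \<longleftrightarrow> v \<in> Val tgt_model q)"
    if "encode_relation Z u v" for u v
    using that sound encode_relation_in_upd_W unfolding encode_relation_def
    by (auto simp: Val_upd_mk) (auto simp: upd_model_def)
  then show ?thesis
    unfolding bisimulation_def using zig_upd_mk zig_converse_upd_mk by blast
qed

lemma bisimilar_upd_mk:
  assumes "Z s\<^sub>0 \<sigma>\<^sub>0 t\<^sub>0" "des_act act_model (src_model, to_nat s\<^sub>0) = to_nat \<sigma>\<^sub>0"
  shows "bisimilar (upd (src_model, to_nat s\<^sub>0) act_model) (tgt_model, to_nat t\<^sub>0)"
proof -
  have "encode_relation Z (prod_encode (to_nat s\<^sub>0, des_act act_model (src_model, to_nat s\<^sub>0))) (to_nat t\<^sub>0)"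
    using assms unfolding encode_relation_def by auto
  then show ?thesis
    using bisimulation_upd_mk unfolding bisimilar_def upd_def by auto
qed

end

datatype gap_state = Root | Full | Gap | Chain nat nat
instance gap_state :: countable by countable_datatype

datatype gap_act = Pick nat | KeepFull | MakeGap nat | GapChild nat | Copy
instance gap_act :: countable by countable_datatype

definition gap_states :: "nat \<Rightarrow> gap_state set" where
  "gap_states n = {Root, Full, Gap} \<union> {Chain j h | j h. h \<le> j \<and> j \<le> n}"

fun gap_rel :: "nat \<Rightarrow> nat \<Rightarrow> gap_state \<Rightarrow> gap_state \<Rightarrow> bool" where
  "gap_rel n k Root v \<longleftrightarrow> v = Full \<or> v = Gap"
| "gap_rel n k Full v \<longleftrightarrow> (\<exists>j \<le> n. v = Chain j j)"
| "gap_rel n k Gap v \<longleftrightarrow> (\<exists>j < n. j \<noteq> k \<and> v = Chain j j)"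
| "gap_rel n k (Chain j h) v \<longleftrightarrow> 0 < h \<and> v = Chain j (h - 1)"

definition gap_model :: "nat \<Rightarrow> nat \<Rightarrow> 'a \<Rightarrow> ('a, 'i) kmodel" where
  "gap_model n k a = mk_kmodel (gap_states n) (gap_rel n k) (\<lambda>_. False) a"

definition height_eq :: "'i \<Rightarrow> nat \<Rightarrow> ('a, 'i) form" where
  "height_eq i h = Conj ((dia i ^^ h) Top) (Neg ((dia i ^^ Suc h) Top))"

definition no_child_of_height :: "'i \<Rightarrow> nat \<Rightarrow> ('a, 'i) form" where
  "no_child_of_height i k = Box i (Neg (height_eq i k))"

lemma Chain_in_gap_states [simp]: "Chain j h \<in> gap_states n \<longleftrightarrow> h \<le> j \<and> j \<le> n"
  and Root_in_gap_states [simp]: "Root \<in> gap_states n"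
  and Full_in_gap_states [simp]: "Full \<in> gap_states n"
  and Gap_in_gap_states [simp]: "Gap \<in> gap_states n"
  by (auto simp: gap_states_def)

lemma sat_gap_Chain_dia_pow:
  assumes "h \<le> j" "j \<le> n"
  shows "sat (gap_model n k a) (to_nat (Chain j h)) ((dia i ^^ m) Top) \<longleftrightarrow> m \<le> h"
  using assms
proof (induction m arbitrary: h)
  case (Suc m)
  then show ?case
    by (cases h) (auto simp: gap_model_def sat_mk_dia)
qed (simp add: gap_model_def)

lemma sat_gap_Chain_height_eq:
  assumes "h \<le> j" "j \<le> n"
  shows "sat (gap_model n k a) (to_nat (Chain j h)) (height_eq i h') \<longleftrightarrow> h' = h"
  unfolding height_eq_def by (simp only: sat.simps sat_gap_Chain_dia_pow[OF assms]) arith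

lemma sat_gap_Full_dia_height_eq: "sat (gap_model n k a) (to_nat Full) (dia i (height_eq i n))"
  using sat_gap_Chain_height_eq[of n n n k a i n] unfolding gap_model_def
  by (auto simp: sat_mk_dia intro!: bexI[of _ "Chain n n"])

lemma sat_gap_Gap_dia_height_eq: "\<not> sat (gap_model n k a) (to_nat Gap) (dia i (height_eq i n))"
  using sat_gap_Chain_height_eq[of _ _ n k a i n] unfolding gap_model_def
  by (force simp: sat_mk_dia)

lemma sat_gap_Full_no_child:
  "k' \<le> n \<Longrightarrow> \<not> sat (gap_model n k a) (to_nat Full) (no_child_of_height i k')"
  using sat_gap_Chain_height_eq[of k' k' n k a i k'] unfolding no_child_of_height_def
  by (auto simp: gap_model_def sat_mk_Box)

lemma sat_gap_Gap_no_child: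
  assumes "k' < n"
  shows "sat (gap_model n k a) (to_nat Gap) (no_child_of_height i k') \<longleftrightarrow> k' = k"
proof -
  have "sat (gap_model n k a) (to_nat Gap) (no_child_of_height i k') \<longleftrightarrow> (\<forall>j < n. j \<noteq> k \<longrightarrow> k' \<noteq> j)"
    using sat_gap_Chain_height_eq[of j j n k a i k' for j] unfolding no_child_of_height_def
    by (auto simp: gap_model_def sat_mk_Box)
  then show ?thesis
    using assms by auto
qed

lemma sat_gap_Root_pick:
  assumes "k' < n"
  shows "sat (gap_model n k a) (to_nat Root) (dia i (no_child_of_height i k')) \<longleftrightarrow> k' = k"
  using assms sat_gap_Full_no_child[of k' n k a i] sat_gap_Gap_no_child[OF assms, of k a i]
  by (auto simp: gap_model_def sat_mk_dia)

definition gap_acts :: "nat \<Rightarrow> gap_act set" where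
  "gap_acts n = Pick ` {..<n} \<union> {KeepFull, Copy} \<union> MakeGap ` {..<n} \<union> GapChild ` {..<n}"

fun gap_arel :: "nat \<Rightarrow> gap_act \<Rightarrow> gap_act \<Rightarrow> bool" where
  "gap_arel n (Pick k) \<tau> \<longleftrightarrow> \<tau> = KeepFull \<or> \<tau> = MakeGap (Suc k mod n)"
| "gap_arel n KeepFull \<tau> \<longleftrightarrow> \<tau> = Copy"
| "gap_arel n (MakeGap j) \<tau> \<longleftrightarrow> \<tau> = GapChild j"
| "gap_arel n (GapChild j) \<tau> \<longleftrightarrow> \<tau> = Copy"
| "gap_arel n Copy \<tau> \<longleftrightarrow> \<tau> = Copy"

fun gap_pre :: "'i \<Rightarrow> nat \<Rightarrow> gap_act \<Rightarrow> ('a, 'i) form" where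
  "gap_pre i n (Pick k) = dia i (no_child_of_height i k)"
| "gap_pre i n KeepFull = dia i (height_eq i n)"
| "gap_pre i n (MakeGap j) = dia i (height_eq i n)"
| "gap_pre i n (GapChild j) = Conj (Neg (height_eq i j)) (Neg (height_eq i n))"
| "gap_pre i n Copy = Top"

definition gap_amodel :: "'i \<Rightarrow> nat \<Rightarrow> 'a \<Rightarrow> ('a, 'i) amodel" where
  "gap_amodel i n a = mk_amodel (gap_acts n) (gap_arel n) (gap_pre i n) (\<lambda>_. None) (Pick ` {..<n}) a"

lemma gap_acts_simps [simp]:
  "Pick k \<in> gap_acts n \<longleftrightarrow> k < n" "KeepFull \<in> gap_acts n" "Copy \<in> gap_acts n"
  "MakeGap j \<in> gap_acts n \<longleftrightarrow> j < n" "GapChild j \<in> gap_acts n \<longleftrightarrow> j < n"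
  by (auto simp: gap_acts_def)

lemma des_act_gap:
  assumes "k < n"
  shows "\<exists>!\<sigma>. \<sigma> \<in> Des (gap_amodel i n a) \<and> psat (gap_model n k a, to_nat Root) (pre (gap_amodel i n a) \<sigma>)"
    and "des_act (gap_amodel i n a) (gap_model n k a, to_nat Root) = to_nat (Pick k)"
proof -
  have pick: "Pick k \<in> Pick ` {..<n}" "sat (gap_model n k a) (to_nat Root) (gap_pre i n (Pick k))"
    using assms sat_gap_Root_pick[OF assms, of k a i] by simp_all
  have only_pick: "\<sigma> = Pick k"
    if "\<sigma> \<in> Pick ` {..<n}" "sat (gap_model n k a) (to_nat Root) (gap_pre i n \<sigma>)" for \<sigma>
    using that sat_gap_Root_pick[of _ n k a i] by auto
  show "\<exists>!\<sigma>. \<sigma> \<in> Des (gap_amodel i n a) \<and> psat (gap_model n k a, to_nat Root) (pre (gap_amodel i n a) \<sigma>)"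
    unfolding gap_amodel_def by (rule des_act_mk(1)[where pr = "gap_pre i n", OF pick only_pick])
  show "des_act (gap_amodel i n a) (gap_model n k a, to_nat Root) = to_nat (Pick k)"
    unfolding gap_amodel_def by (rule des_act_mk(2)[where pr = "gap_pre i n", OF pick only_pick])
qed

inductive gap_step :: "nat \<Rightarrow> nat \<Rightarrow> gap_state \<Rightarrow> gap_act \<Rightarrow> gap_state \<Rightarrow> bool" for n k where
  "gap_step n k Root (Pick k) Root"
| "gap_step n k Full KeepFull Full"
| "gap_step n k Full (MakeGap (Suc k mod n)) Gap"
| "h \<le> j \<Longrightarrow> j \<le> n \<Longrightarrow> gap_step n k (Chain j h) Copy (Chain j h)"
| "j < n \<Longrightarrow> j \<noteq> Suc k mod n \<Longrightarrow> gap_step n k (Chain j j) (GapChild (Suc k mod n)) (Chain j j)"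

context
  fixes n k :: nat
  assumes k: "k < n"
begin

lemma gap_step_sound:
  assumes "gap_step n k s \<sigma> t"
  shows "s \<in> gap_states n \<and> \<sigma> \<in> gap_acts n \<and> sat (gap_model n k a) (to_nat s) (gap_pre i n \<sigma>)
    \<and> t \<in> gap_states n"
  using assms k sat_gap_Root_pick[of k n k a i] sat_gap_Full_dia_height_eq[of n k a i]
    sat_gap_Chain_height_eq[of _ _ n k a i]
  by cases (auto simp: gap_model_def)

lemma gap_step_forth:
  assumes "gap_step n k s \<sigma> t" "s' \<in> gap_states n" "gap_rel n k s s'" "\<sigma>' \<in> gap_acts n"
    "gap_arel n \<sigma> \<sigma>'" "sat (gap_model n k a) (to_nat s') (gap_pre i n \<sigma>')"
  shows "\<exists>t' \<in> gap_states n. gap_rel n (Suc k mod n) t t' \<and> gap_step n k s' \<sigma>' t'"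
  using assms(1)
proof cases
  case 3
  then obtain j where "s' = Chain j j" "j \<le> n" "\<sigma>' = GapChild (Suc k mod n)"
    using assms(3,5) by auto
  moreover from this have "j \<noteq> Suc k mod n" "j \<noteq> n"
    using assms(6) sat_gap_Chain_height_eq[of j j n k a i] by auto
  ultimately show ?thesis
    using 3 by (intro bexI[of _ s']) (auto intro: gap_step.intros)
qed (use assms k sat_gap_Gap_dia_height_eq[of n k a i] in \<open>auto intro: gap_step.intros\<close>)

lemma gap_step_backward:
  assumes "gap_step n k s \<sigma> t" "t' \<in> gap_states n" "gap_rel n (Suc k mod n) t t'"
  shows "\<exists>s' \<sigma>'. s' \<in> gap_states n \<and> gap_rel n k s s' \<and> \<sigma>' \<in> gap_acts n \<and> gap_arel n \<sigma> \<sigma>'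
    \<and> gap_step n k s' \<sigma>' t'"
  using assms(1)
proof cases
  case 1
  then have "t' = Full \<or> t' = Gap"
    using assms(3) by simp
  then show ?thesis
  proof
    assume "t' = Full"
    then show ?thesis
      using 1 by (intro exI[of _ Full] exI[of _ KeepFull]) (auto intro: gap_step.intros)
  next
    assume "t' = Gap"
    then show ?thesis
      using 1 k by (intro exI[of _ Full] exI[of _ "MakeGap (Suc k mod n)"]) (auto intro: gap_step.intros)
  qed
qed (use assms k in \<open>auto intro: gap_step.intros\<close>)

lemma gap_upd_bisimilar:
  "bisimilar (upd (gap_model n k a, to_nat Root) (gap_amodel i n a)) (gap_model n (Suc k mod n) a, to_nat Root)"
  unfolding gap_model_def gap_amodel_def
proof (rule bisimilar_upd_mk[where Z = "gap_step n k" and \<sigma>\<^sub>0 = "Pick k"])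
  let ?M = "mk_kmodel (gap_states n) (gap_rel n k) (\<lambda>_. False) a :: ('a, 'i) kmodel"
  show "s \<in> gap_states n \<and> \<sigma> \<in> gap_acts n \<and> sat ?M (to_nat s) (gap_pre i n \<sigma>)
      \<and> t \<in> gap_states n \<and> False = (case None of None \<Rightarrow> False | Some b \<Rightarrow> b)"
    if "gap_step n k s \<sigma> t" for s \<sigma> t
    using gap_step_sound[OF that, unfolded gap_model_def] by simp
  show "\<exists>t' \<in> gap_states n. gap_rel n (Suc k mod n) t t' \<and> gap_step n k s' \<sigma>' t'"
    if "gap_step n k s \<sigma> t" "s' \<in> gap_states n" "gap_rel n k s s'" "\<sigma>' \<in> gap_acts n"
      "gap_arel n \<sigma> \<sigma>'" "sat ?M (to_nat s') (gap_pre i n \<sigma>')" for s \<sigma> t s' \<sigma>'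
    using gap_step_forth[unfolded gap_model_def, OF that] .
  show "\<exists>s' \<sigma>'. s' \<in> gap_states n \<and> gap_rel n k s s' \<and> \<sigma>' \<in> gap_acts n \<and> gap_arel n \<sigma> \<sigma>'
      \<and> gap_step n k s' \<sigma>' t'"
    if "gap_step n k s \<sigma> t" "t' \<in> gap_states n" "gap_rel n (Suc k mod n) t t'" for s \<sigma> t t'
    using gap_step_backward[OF that] .
  show "gap_step n k Root (Pick k) Root"
    by (rule gap_step.intros)
  show "des_act (mk_amodel (gap_acts n) (gap_arel n) (gap_pre i n) (\<lambda>_. None) (Pick ` {..<n}) a)
      (?M, to_nat Root) = to_nat (Pick k)"
    using des_act_gap(2)[OF k] unfolding gap_model_def gap_amodel_def .
qed

end

lemma gap_amodel_finite_static:
  assumes "0 < n"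
  shows "finite_am (gap_amodel i n a) \<and> static_am (gap_amodel i n a) \<and> \<not> boolean_am (gap_amodel i n a)"
  using assms
  by (auto simp: finite_am_def static_am_def boolean_am_def gap_amodel_def gap_acts_def dia_def
      intro!: bexI[of _ "Pick 0"])

lemma gap_model_mequiv_imp_eq:
  assumes "c < n" "d < n" "mequiv (gap_model n c a :: ('a, 'i) kmodel, to_nat Root) (gap_model n d a, to_nat Root)"
  shows "c = d"
proof -
  fix i :: 'i
  have "sat (gap_model n c a) (to_nat Root) \<phi> \<longleftrightarrow> sat (gap_model n d a) (to_nat Root) \<phi>" for \<phi> :: "('a, 'i) form"
    using assms(3) unfolding mequiv_def psat_def by simp
  from this[of "dia i (no_child_of_height i c)"] show ?thesis
    using sat_gap_Root_pick[OF assms(1), of c a i] sat_gap_Root_pick[OF assms(1), of d a i] by simp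
qed

lemma static_periodic_example:
  assumes "0 < n" "normal_logic \<Lambda>"
  shows "\<exists>(X :: ('a, 'i) pointed set) S f x.
            (\<forall>y \<in> X. wf_pointed y) \<and> clean_amodel \<Lambda> X S \<and> induced_map X S f
            \<and> finite_am S \<and> static_am S \<and> \<not> boolean_am S
            \<and> x \<in> X \<and> periodic_orbit f (mclass X x) \<and> orbit_period f (mclass X x) = n"
proof -
  fix a :: 'a and i :: 'i
  let ?S = "gap_amodel i n a :: ('a, 'i) amodel"
  let ?x = "\<lambda>k. (gap_model n k a :: ('a, 'i) kmodel, to_nat Root)"
  have "\<exists>X f x. (\<forall>y \<in> X. wf_pointed y) \<and> clean_amodel \<Lambda> X ?S \<and> induced_map X ?S f
      \<and> x \<in> X \<and> periodic_orbit f (mclass X x) \<and> orbit_period f (mclass X x) = n"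
  proof (rule cyclic_clean_map[where xs = ?x])
    show "wf_amodel ?S"
      using assms(1) unfolding gap_amodel_def by (intro wf_amodel_mk) auto
    show "wf_pointed (?x c)" for c
      by (simp add: gap_model_def wf_pointed_mk)
    show "\<exists>!\<sigma>. \<sigma> \<in> Des ?S \<and> psat (?x c) (pre ?S \<sigma>)" if "c < n" for c
      using des_act_gap(1)[OF that] .
    show "bisimilar (upd (?x c) ?S) (?x (Suc c mod n))" if "c < n" for c
      using gap_upd_bisimilar[OF that] .
    show "finite (Act ?S)"
      using gap_amodel_finite_static[OF assms(1), of i a] by (simp add: finite_am_def)
    show "c = d" if "c < n" "d < n" "mequiv (?x c) (?x d)" for c d
      using gap_model_mequiv_imp_eq[OF that] .
  qed (use assms in simp_all)
  moreover note gap_amodel_finite_static[OF assms(1), of i a]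
  ultimately show ?thesis
    by blast
qed

datatype mark_state = MRoot | Cell nat nat nat
instance mark_state :: countable by countable_datatype

datatype mark_act = Start | Track nat nat
instance mark_act :: countable by countable_datatype

text \<open>\<open>Cell m p d\<close> is cell \<open>d\<close> of a chain of length \<open>m\<close> marked at \<open>p\<close>; \<open>p > m\<close> means unmarked.\<close>

definition chain_ok :: "nat \<Rightarrow> nat \<Rightarrow> nat \<Rightarrow> nat \<Rightarrow> bool" where
  "chain_ok n c m p \<longleftrightarrow> (1 \<le> m \<and> m \<le> n \<and> 1 \<le> p \<and> p \<le> Suc n) \<or> (m = Suc n \<and> p = c)"

definition mark_states :: "nat \<Rightarrow> nat \<Rightarrow> mark_state set" where
  "mark_states n c = {MRoot} \<union> {Cell m p d | m p d. chain_ok n c m p \<and> 1 \<le> d \<and> d \<le> m}"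

fun mark_rel :: "mark_state \<Rightarrow> mark_state \<Rightarrow> bool" where
  "mark_rel MRoot v \<longleftrightarrow> (\<exists>m p. v = Cell m p 1)"
| "mark_rel (Cell m p d) v \<longleftrightarrow> d < m \<and> v = Cell m p (Suc d)"

fun mark_lab :: "mark_state \<Rightarrow> bool" where
  "mark_lab MRoot \<longleftrightarrow> False"
| "mark_lab (Cell m p d) \<longleftrightarrow> d = p"

definition mark_model :: "nat \<Rightarrow> nat \<Rightarrow> 'a \<Rightarrow> ('a, 'i) kmodel" where
  "mark_model n c a = mk_kmodel (mark_states n c) mark_rel mark_lab a"

definition next_mark :: "nat \<Rightarrow> nat \<Rightarrow> nat" where
  "next_mark n i = (if i < n then Suc i else 1)"

definition mark_acts :: "nat \<Rightarrow> mark_act set" where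
  "mark_acts n = {Start} \<union> {Track i l | i l. i \<le> n \<and> 1 \<le> l \<and> l \<le> (if i = 0 then n else Suc n)}"

fun mark_arel :: "mark_act \<Rightarrow> mark_act \<Rightarrow> bool" where
  "mark_arel Start \<tau> \<longleftrightarrow> (\<exists>i. \<tau> = Track i 1)"
| "mark_arel (Track i l) \<tau> \<longleftrightarrow> \<tau> = Track i (Suc l)"

fun mark_pre :: "'a \<Rightarrow> mark_act \<Rightarrow> ('a, 'i) form" where
  "mark_pre a Start = Top"
| "mark_pre a (Track i l) = (if i = 0 then Top else lit a (l = i))"

fun mark_eff :: "nat \<Rightarrow> mark_act \<Rightarrow> bool option" where
  "mark_eff n Start = None"
| "mark_eff n (Track i l) = (if i = 0 then None else Some (l = next_mark n i))"

definition mark_amodel :: "nat \<Rightarrow> 'a \<Rightarrow> ('a, 'i) amodel" where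
  "mark_amodel n a = mk_amodel (mark_acts n) mark_arel (mark_pre a) (mark_eff n) {Start} a"

text \<open>Following a chain marked at \<open>p\<close> with the actions \<open>Track i _\<close> keeps its cells while \<open>d = p\<close>
  agrees with \<open>d = i\<close>; \<open>i = 0\<close> guesses nothing and copies at most \<open>n\<close> cells. The surviving copy
  has length \<open>copy_len n i m p\<close> and mark \<open>copy_mark n i p\<close>.\<close>

definition copy_len :: "nat \<Rightarrow> nat \<Rightarrow> nat \<Rightarrow> nat \<Rightarrow> nat" where
  "copy_len n i m p = (if i = 0 then min m n else if p = i then m else min m (min p i - 1))"

definition copy_mark :: "nat \<Rightarrow> nat \<Rightarrow> nat \<Rightarrow> nat" where
  "copy_mark n i p = (if i = 0 then p else next_mark n i)"

lemma Cell_in_mark_states [simp]: "Cell m p d \<in> mark_states n c \<longleftrightarrow> chain_ok n c m p \<and> 1 \<le> d \<and> d \<le> m"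
  and MRoot_in_mark_states [simp]: "MRoot \<in> mark_states n c"
  by (auto simp: mark_states_def)

lemma mark_acts_simps [simp]:
  "Track i l \<in> mark_acts n \<longleftrightarrow> i \<le> n \<and> 1 \<le> l \<and> l \<le> (if i = 0 then n else Suc n)"
  "Start \<in> mark_acts n"
  by (auto simp: mark_acts_def)

lemma copy_len_le: "copy_len n i m p \<le> m"
  unfolding copy_len_def by auto

lemma copy_len_label:
  "i \<noteq> 0 \<Longrightarrow> 1 \<le> d \<Longrightarrow> d \<le> copy_len n i m p \<Longrightarrow> d = p \<longleftrightarrow> d = i"
  unfolding copy_len_def by (auto split: if_splits)

lemma copy_len_one:
  "i \<noteq> 0 \<Longrightarrow> (1 = p \<longleftrightarrow> 1 = i) \<Longrightarrow> 1 \<le> p \<Longrightarrow> 1 \<le> m \<Longrightarrow> 1 \<le> copy_len n i m p"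
  unfolding copy_len_def by auto

lemma copy_len_Suc:
  "i \<noteq> 0 \<Longrightarrow> 1 \<le> d \<Longrightarrow> d \<le> copy_len n i m p \<Longrightarrow> Suc d \<le> m \<Longrightarrow> (Suc d = p \<longleftrightarrow> Suc d = i)
    \<Longrightarrow> Suc d \<le> copy_len n i m p"
  unfolding copy_len_def by (auto split: if_splits)

lemma chain_ok_copy:
  assumes "chain_ok n c m p" "i \<le> n" "1 \<le> copy_len n i m p" "1 \<le> c" "c \<le> n"
  shows "chain_ok n (next_mark n c) (copy_len n i m p) (copy_mark n i p)"
  using assms unfolding chain_ok_def copy_len_def copy_mark_def next_mark_def by (auto split: if_splits)

lemma des_act_mark:
  fixes n c :: nat and a :: 'a
  defines "S \<equiv> mark_amodel n a :: ('a, 'i) amodel"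
  shows "\<exists>!\<sigma>. \<sigma> \<in> Des S \<and> psat (mark_model n c a, to_nat MRoot) (pre S \<sigma>)"
    and "des_act S (mark_model n c a, to_nat MRoot) = to_nat Start"
proof -
  show "\<exists>!\<sigma>. \<sigma> \<in> Des S \<and> psat (mark_model n c a, to_nat MRoot) (pre S \<sigma>)"
    unfolding S_def mark_amodel_def
    by (rule des_act_mk(1)[where pr = "mark_pre a :: mark_act \<Rightarrow> ('a, 'i) form"]) simp_all
  show "des_act S (mark_model n c a, to_nat MRoot) = to_nat Start"
    unfolding S_def mark_amodel_def
    by (rule des_act_mk(2)[where pr = "mark_pre a :: mark_act \<Rightarrow> ('a, 'i) form"]) simp_all
qed

inductive mark_step :: "nat \<Rightarrow> nat \<Rightarrow> mark_state \<Rightarrow> mark_act \<Rightarrow> mark_state \<Rightarrow> bool" for n c where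
  "mark_step n c MRoot Start MRoot"
| "chain_ok n c m p \<Longrightarrow> i \<le> n \<Longrightarrow> 1 \<le> d \<Longrightarrow> d \<le> copy_len n i m p
    \<Longrightarrow> mark_step n c (Cell m p d) (Track i d) (Cell (copy_len n i m p) (copy_mark n i p) d)"

context
  fixes n c :: nat
  assumes n: "0 < n" and c: "1 \<le> c" "c \<le> n"
begin

lemma chain_ok_bounds: "chain_ok n c m p \<Longrightarrow> 1 \<le> m \<and> m \<le> Suc n \<and> 1 \<le> p"
  using c unfolding chain_ok_def by auto

lemma mark_step_sound:
  assumes "mark_step n c s \<sigma> t"
  shows "s \<in> mark_states n c \<and> \<sigma> \<in> mark_acts n \<and> sat (mark_model n c a) (to_nat s) (mark_pre a \<sigma>)
    \<and> t \<in> mark_states n (next_mark n c) \<and> mark_lab t = (case mark_eff n \<sigma> of None \<Rightarrow> mark_lab s | Some b \<Rightarrow> b)"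
  using assms
proof cases
  case (2 m p i d)
  then show ?thesis
    using copy_len_le[of n i m p] chain_ok_bounds[of m p] copy_len_label[of i d n m p]
      chain_ok_copy[of n c m p i] c
    by (auto simp: mark_model_def copy_mark_def copy_len_def)
qed simp

lemma mark_step_forth:
  assumes "mark_step n c s \<sigma> t" "s' \<in> mark_states n c" "mark_rel s s'" "\<sigma>' \<in> mark_acts n"
    "mark_arel \<sigma> \<sigma>'" "sat (mark_model n c a) (to_nat s') (mark_pre a \<sigma>')"
  shows "\<exists>t' \<in> mark_states n (next_mark n c). mark_rel t t' \<and> mark_step n c s' \<sigma>' t'"
  using assms(1)
proof cases
  case 1
  then obtain m p i where s': "s' = Cell m p 1" "\<sigma>' = Track i 1"
    using assms(3,5) by auto
  then have ok: "chain_ok n c m p" "i \<le> n" "i \<noteq> 0 \<Longrightarrow> (1 = p \<longleftrightarrow> 1 = i)"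
    using assms(2,4,6) by (auto simp: mark_model_def)
  then have "1 \<le> copy_len n i m p"
    using n copy_len_one[of i p m n] chain_ok_bounds[of m p] unfolding copy_len_def by auto
  then show ?thesis
    using 1 s' ok chain_ok_copy[of n c m p i] c
    by (intro bexI[of _ "Cell (copy_len n i m p) (copy_mark n i p) 1"]) (auto intro: mark_step.intros)
next
  case (2 m p i d)
  then have s': "s' = Cell m p (Suc d)" "d < m" "\<sigma>' = Track i (Suc d)"
    using assms(3,5) by auto
  then have "Suc d \<le> copy_len n i m p"
    using 2 assms(4,6) copy_len_Suc[of i d n m p]
    unfolding copy_len_def by (auto simp: mark_model_def split: if_splits)
  then show ?thesis
    using 2 s' chain_ok_copy[of n c m p i] c
    by (intro bexI[of _ "Cell (copy_len n i m p) (copy_mark n i p) (Suc d)"]) (auto intro: mark_step.intros)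
qed

lemma mark_step_backward:
  assumes "mark_step n c s \<sigma> t" "t' \<in> mark_states n (next_mark n c)" "mark_rel t t'"
  shows "\<exists>s' \<sigma>'. s' \<in> mark_states n c \<and> mark_rel s s' \<and> \<sigma>' \<in> mark_acts n \<and> mark_arel \<sigma> \<sigma>'
    \<and> mark_step n c s' \<sigma>' t'"
  using assms(1)
proof cases
  case 1
  then obtain L M where t': "t' = Cell L M 1" "chain_ok n (next_mark n c) L M" "1 \<le> L"
    using assms(2,3) by auto
  show ?thesis
  proof (cases "L = Suc n")
    case True
    then have "M = next_mark n c"
      using t' unfolding chain_ok_def by auto
    then have "mark_step n c (Cell (Suc n) c 1) (Track c 1) t'"
      using mark_step.intros(2)[of n c "Suc n" c c 1] True t' c
      by (simp add: chain_ok_def copy_len_def copy_mark_def)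
    then show ?thesis
      using 1 c by (intro exI[of _ "Cell (Suc n) c 1"] exI[of _ "Track c 1"]) (simp add: chain_ok_def)
  next
    case False
    then have "chain_ok n c L M" "L \<le> n"
      using t' unfolding chain_ok_def by auto
    then have "mark_step n c (Cell L M 1) (Track 0 1) t'"
      using mark_step.intros(2)[of n c L M 0 1] t' by (simp add: copy_len_def copy_mark_def)
    then show ?thesis
      using 1 t' \<open>L \<le> n\<close> \<open>chain_ok n c L M\<close>
      by (intro exI[of _ "Cell L M 1"] exI[of _ "Track 0 1"]) simp
  qed
next
  case (2 m p i d)
  then have t': "t' = Cell (copy_len n i m p) (copy_mark n i p) (Suc d)" "d < copy_len n i m p"
    using assms(3) by auto
  then have "mark_step n c (Cell m p (Suc d)) (Track i (Suc d)) t'"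
    using 2 by (simp add: mark_step.intros)
  moreover have "Track i (Suc d) \<in> mark_acts n"
    using 2 t' copy_len_le[of n i m p] chain_ok_bounds[of m p] by (auto simp: copy_len_def)
  ultimately show ?thesis
    using 2 t' copy_len_le[of n i m p]
    by (intro exI[of _ "Cell m p (Suc d)"] exI[of _ "Track i (Suc d)"]) auto
qed

lemma mark_upd_bisimilar:
  "bisimilar (upd (mark_model n c a, to_nat MRoot) (mark_amodel n a))
    (mark_model n (next_mark n c) a, to_nat MRoot)"
  unfolding mark_model_def mark_amodel_def
proof (rule bisimilar_upd_mk[where Z = "mark_step n c" and \<sigma>\<^sub>0 = Start])
  let ?M = "mk_kmodel (mark_states n c) mark_rel mark_lab a :: ('a, 'i) kmodel"
  show "s \<in> mark_states n c \<and> \<sigma> \<in> mark_acts n \<and> sat ?M (to_nat s) (mark_pre a \<sigma>)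
      \<and> t \<in> mark_states n (next_mark n c)
      \<and> mark_lab t = (case mark_eff n \<sigma> of None \<Rightarrow> mark_lab s | Some b \<Rightarrow> b)"
    if "mark_step n c s \<sigma> t" for s \<sigma> t
    using mark_step_sound[OF that, unfolded mark_model_def] .
  show "\<exists>t' \<in> mark_states n (next_mark n c). mark_rel t t' \<and> mark_step n c s' \<sigma>' t'"
    if "mark_step n c s \<sigma> t" "s' \<in> mark_states n c" "mark_rel s s'" "\<sigma>' \<in> mark_acts n"
      "mark_arel \<sigma> \<sigma>'" "sat ?M (to_nat s') (mark_pre a \<sigma>')" for s \<sigma> t s' \<sigma>'
    using mark_step_forth[unfolded mark_model_def, OF that] .
  show "\<exists>s' \<sigma>'. s' \<in> mark_states n c \<and> mark_rel s s' \<and> \<sigma>' \<in> mark_acts n \<and> mark_arel \<sigma> \<sigma>'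
      \<and> mark_step n c s' \<sigma>' t'"
    if "mark_step n c s \<sigma> t" "t' \<in> mark_states n (next_mark n c)" "mark_rel t t'" for s \<sigma> t t'
    using mark_step_backward[OF that] .
  show "mark_step n c MRoot Start MRoot"
    by (rule mark_step.intros)
  show "des_act (mk_amodel (mark_acts n) mark_arel (mark_pre a) (mark_eff n) {Start} a) (?M, to_nat MRoot)
      = to_nat Start"
    using des_act_mark(2) unfolding mark_model_def mark_amodel_def .
qed

end

lemma sat_mark_Cell_dia_pow:
  assumes "chain_ok n c m p" "1 \<le> d" "d \<le> m"
  shows "sat (mark_model n c a) (to_nat (Cell m p d)) ((dia i ^^ k) \<phi>) \<longleftrightarrow>
    d + k \<le> m \<and> sat (mark_model n c a) (to_nat (Cell m p (d + k))) \<phi>"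
  using assms(2,3)
proof (induction k arbitrary: d)
  case (Suc k)
  have "sat (mark_model n c a) (to_nat (Cell m p d)) ((dia i ^^ Suc k) \<phi>) \<longleftrightarrow>
      d < m \<and> sat (mark_model n c a) (to_nat (Cell m p (Suc d))) ((dia i ^^ k) \<phi>)"
    using assms(1) Suc.prems by (auto simp: mark_model_def sat_mk_dia)
  also have "\<dots> \<longleftrightarrow> d + Suc k \<le> m \<and> sat (mark_model n c a) (to_nat (Cell m p (d + Suc k))) \<phi>"
    using Suc.IH[of "Suc d"] Suc.prems by auto
  finally show ?case .
qed simp

definition marked_at :: "'i \<Rightarrow> nat \<Rightarrow> 'a \<Rightarrow> nat \<Rightarrow> ('a, 'i) form" where
  "marked_at i n a k = dia i (Conj ((dia i ^^ n) Top) ((dia i ^^ k) (Atom a)))"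

lemma sat_mark_MRoot_marked_at:
  assumes "1 \<le> c" "c \<le> n"
  shows "sat (mark_model n c a) (to_nat MRoot) (marked_at i n a k) \<longleftrightarrow> Suc k = c"
proof -
  let ?M = "mark_model n c a"
  have start: "sat ?M (to_nat (Cell m p 1)) (Conj ((dia i ^^ n) Top) ((dia i ^^ k) (Atom a))) \<longleftrightarrow>
      Suc n \<le> m \<and> Suc k \<le> m \<and> Suc k = p" if "chain_ok n c m p" "1 \<le> m" for m p
  proof -
    have "sat ?M (to_nat (Cell m p 1)) ((dia i ^^ n) Top) \<longleftrightarrow> Suc n \<le> m"
      using sat_mark_Cell_dia_pow[OF that(1) _ that(2), where a = a and i = i and k = n and \<phi> = Top] by simp
    moreover have "sat ?M (to_nat (Cell m p 1)) ((dia i ^^ k) (Atom a)) \<longleftrightarrow> Suc k \<le> m \<and> Suc k = p"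
      using sat_mark_Cell_dia_pow[OF that(1) _ that(2), where a = a and i = i and k = k and \<phi> = "Atom a"] that
      by (auto simp: mark_model_def)
    ultimately show ?thesis
      by simp
  qed
  have "sat ?M (to_nat MRoot) (marked_at i n a k) \<longleftrightarrow>
      (\<exists>m p. chain_ok n c m p \<and> 1 \<le> m
        \<and> sat ?M (to_nat (Cell m p 1)) (Conj ((dia i ^^ n) Top) ((dia i ^^ k) (Atom a))))"
    unfolding marked_at_def by (fastforce simp: mark_model_def sat_mk_dia)
  also have "\<dots> \<longleftrightarrow> (\<exists>m p. chain_ok n c m p \<and> 1 \<le> m \<and> Suc n \<le> m \<and> Suc k \<le> m \<and> Suc k = p)"
    using start by blast
  also have "\<dots> \<longleftrightarrow> Suc k = c"
    using assms unfolding chain_ok_def by auto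
  finally show ?thesis .
qed

lemma mark_amodel_finite_boolean:
  assumes "0 < n"
  shows "finite_am (mark_amodel n a :: ('a, 'i) amodel) \<and> boolean_am (mark_amodel n a :: ('a, 'i) amodel)
    \<and> \<not> static_am (mark_amodel n a :: ('a, 'i) amodel)"
proof (intro conjI)
  have "mark_acts n \<subseteq> {Start} \<union> (\<lambda>(i, l). Track i l) ` ({..n} \<times> {..Suc n})"
    by (auto simp: mark_acts_def)
  then show "finite_am (mark_amodel n a :: ('a, 'i) amodel)"
    unfolding finite_am_def mark_amodel_def by (auto intro: finite_subset)
  have "modality_free (mark_pre a \<sigma> :: ('a, 'i) form)" for \<sigma>
    by (cases \<sigma>) (simp_all add: lit_def)
  then show "boolean_am (mark_amodel n a :: ('a, 'i) amodel)"
    by (simp add: boolean_am_def mark_amodel_def)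
  show "\<not> static_am (mark_amodel n a :: ('a, 'i) amodel)"
    using assms unfolding static_am_def mark_amodel_def
    by (auto simp: lit_def intro!: bexI[of _ "Track 1 1"] split: if_splits)
qed

lemma mark_model_mequiv_imp_eq:
  assumes "1 \<le> c" "c \<le> n" "1 \<le> d" "d \<le> n"
    and "mequiv (mark_model n c a :: ('a, 'i) kmodel, to_nat MRoot) (mark_model n d a, to_nat MRoot)"
  shows "c = d"
proof -
  fix i :: 'i
  have "sat (mark_model n c a) (to_nat MRoot) \<phi> \<longleftrightarrow> sat (mark_model n d a) (to_nat MRoot) \<phi>"
    for \<phi> :: "('a, 'i) form"
    using assms(5) unfolding mequiv_def psat_def by simp
  from this[of "marked_at i n a (c - 1)"] show ?thesis
    using sat_mark_MRoot_marked_at[of c n a i "c - 1"] sat_mark_MRoot_marked_at[of d n a i "c - 1"] assms(1-4)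
    by simp
qed

lemma boolean_periodic_example:
  assumes "0 < n" "normal_logic \<Lambda>"
  shows "\<exists>(X :: ('a, 'i) pointed set) S f x.
            (\<forall>y \<in> X. wf_pointed y) \<and> clean_amodel \<Lambda> X S \<and> induced_map X S f
            \<and> finite_am S \<and> boolean_am S \<and> \<not> static_am S
            \<and> x \<in> X \<and> periodic_orbit f (mclass X x) \<and> orbit_period f (mclass X x) = n"
proof -
  fix a :: 'a
  let ?S = "mark_amodel n a :: ('a, 'i) amodel"
  let ?x = "\<lambda>k. (mark_model n (Suc k) a :: ('a, 'i) kmodel, to_nat MRoot)"
  have "\<exists>X f x. (\<forall>y \<in> X. wf_pointed y) \<and> clean_amodel \<Lambda> X ?S \<and> induced_map X ?S f
      \<and> x \<in> X \<and> periodic_orbit f (mclass X x) \<and> orbit_period f (mclass X x) = n"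
  proof (rule cyclic_clean_map[where xs = ?x])
    show "wf_amodel ?S"
      unfolding mark_amodel_def by (rule wf_amodel_mk) auto
    show "wf_pointed (?x k)" for k
      by (simp add: mark_model_def wf_pointed_mk)
    show "\<exists>!\<sigma>. \<sigma> \<in> Des ?S \<and> psat (?x k) (pre ?S \<sigma>)" for k
      using des_act_mark(1) .
    show "bisimilar (upd (?x k) ?S) (?x (Suc k mod n))" if "k < n" for k
    proof -
      have "next_mark n (Suc k) = Suc (Suc k mod n)"
        using that unfolding next_mark_def by (cases "Suc k = n") auto
      then show ?thesis
        using mark_upd_bisimilar[OF assms(1), of "Suc k" a] that by simp
    qed
    show "k = l" if "k < n" "l < n" "mequiv (?x k) (?x l)" for k l
      using mark_model_mequiv_imp_eq[of "Suc k" n "Suc l" a] that by simp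
    show "finite (Act ?S)"
      using mark_amodel_finite_boolean[OF assms(1), where a = a and 'i = 'i] by (simp add: finite_am_def)
  qed (use assms in simp_all)
  moreover note mark_amodel_finite_boolean[OF assms(1), where a = a and 'i = 'i]
  ultimately show ?thesis
    by blast
qed

theorem proposition12:
  fixes n :: nat and \<Lambda> :: "('a, 'i::finite) form set"
  assumes "n \<ge> 1" and "normal_logic \<Lambda>"
  shows "(\<exists>(X :: ('a, 'i) pointed set) S f x.
            (\<forall>y \<in> X. wf_pointed y) \<and> clean_amodel \<Lambda> X S \<and> induced_map X S f
            \<and> finite_am S \<and> static_am S \<and> \<not> boolean_am S
            \<and> x \<in> X \<and> periodic_orbit f (mclass X x) \<and> orbit_period f (mclass X x) = n)
       \<and> (\<exists>(X :: ('a, 'i) pointed set) S f x.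
            (\<forall>y \<in> X. wf_pointed y) \<and> clean_amodel \<Lambda> X S \<and> induced_map X S f
            \<and> finite_am S \<and> boolean_am S \<and> \<not> static_am S
            \<and> x \<in> X \<and> periodic_orbit f (mclass X x) \<and> orbit_period f (mclass X x) = n)"
proof -
  have "0 < n"
    using assms(1) by simp
  then show ?thesis
    using assms(2) by (intro conjI static_periodic_example boolean_periodic_example)
qed

end
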